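(* Under the standing setting and Assumptions (A1), (A2), (A3) described in the context, for every $T>0$, $$\lim_{\epsilon\to 0}\ \sup_{0\le t\le T}|X(t)-\bar X^{\rm c}(t)|=0\quad\text{almost surely.}$$
   Context: Setting. Let $(\Omega,\mathcal F,P)$ be a complete probability space, $\epsilon_0>0$ fixed and $\epsilon\in(0,\epsilon_0)$ a small parameter. Consider the discrete-time system $$X_{k+1}=X_k+\epsilon f(X_k,Y_{k+1}),\quad k=0,1,2,\dots,\qquad X_0=x\in\mathbb R^n \text{ (deterministic)},$$ where $\{Y_k\}$ is an $\mathbb R^m$-valued stochastic sequence with state space $S_Y\subset\mathbb R^m$, and $f:\mathbb R^n\times\mathbb R^m\to\mathbb R^n$. (A1) $f(x,y)$ is continuous in $(x,y)$; for each $x$, $y\mapsto f(x,y)$ is bounded; and $f$ is locally Lipschitz in $x$ uniformly in $y$: for every compact $D\subset\mathbb R^n$ there is $k_D$ with $|f(x_1,y)-f(x_2,y)|\le k_D|x_1-x_2|$ for all $x_1,x_2\in D$, $y\in S_Y$. (A2) $\{Y_k\}$ is ergodic with invariant distribution $\mu$, in the sense that for each $x$, $\bar f(x):=\int_{S_Y}f(x,y)\mu(dy)=\lim_{N\to\infty}\frac1{N+1}\sum_{k=0}^N f(x,Y_{k+1})$ almost surely. Average systems: the discrete average system $\bar X^{\rm d}_{k+1}=\bar X^{\rm d}_k+\epsilon\bar f(\bar X^{\rm d}_k)$, and the continuous average system $\frac{d}{dt}\bar X^{\rm c}(t)=\bar f(\bar X^{\rm c}(t))$, both with initial value $\bar X^{\rm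 d}_0=\bar X^{\rm c}(0)=X_0=x$. (A3) The continuous average system has a solution on $[0,\infty)$. Continuous-time versions: with $t_k=\epsilon k$, define the piecewise constant processes $X(t)=X_k$ and $\bar X^{\rm d}(t)=\bar X^{\rm d}_k$ for $t_k\le t<t_{k+1}$ (these depend on $\epsilon$). *)

theory Defs
  imports "HOL-Probability.Probability"
begin

fun Xseq :: "('n::real_normed_vector \<Rightarrow> 'm \<Rightarrow> 'n) \<Rightarrow> (nat \<Rightarrow> 'w \<Rightarrow> 'm)
             \<Rightarrow> 'n \<Rightarrow> real \<Rightarrow> 'w \<Rightarrow> nat \<Rightarrow> 'n" where
  "Xseq f Y x eps \<omega> 0 = x"
| "Xseq f Y x eps \<omega> (Suc k) =
     Xseq f Y x eps \<omega> k + eps *\<^sub>R f (Xseq f Y x eps \<omega> k) (Y (Suc k) \<omega>)"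

definition Xpc :: "('n::real_normed_vector \<Rightarrow> 'm \<Rightarrow> 'n) \<Rightarrow> (nat \<Rightarrow> 'w \<Rightarrow> 'm)
             \<Rightarrow> 'n \<Rightarrow> real \<Rightarrow> 'w \<Rightarrow> real \<Rightarrow> 'n" where
  "Xpc f Y x eps \<omega> t = Xseq f Y x eps \<omega> (nat \<lfloor>t / eps\<rfloor>)"

end

theory Submission
  imports Defs
begin

text \<open>
  On a compact tube around the averaged trajectory Xc([0,T]) the field f and its average
  fbar are Lipschitz and bounded. Writing X_k - Xc(k h) as
  h \<Sum>(f(X_i, Y_{i+1}) - f(Xc(i h), Y_{i+1})) + h \<Sum>(f(Xc(i h), Y_{i+1}) - fbar(Xc(i h)))
  minus the Riemann-sum error of Xc, a discrete Gronwall inequality reduces the claim to the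
  fluctuation sums in the middle. To control them, Xc is frozen on a grid of mesh T/p: within a
  grid cell the frozen fluctuation is a difference of two partial sums of f(z, Y_{i+1}) - fbar(z)
  at a fixed point z, and these are o(1/h) by ergodicity. Ergodicity holds almost surely only for
  each fixed z, so it is used at the countably many points Xc(jT/p).
\<close>

lemma grid_floor_bounds:
  fixes s h :: real
  assumes "0 \<le> s" "0 < h"
  shows "real (nat \<lfloor>s / h\<rfloor>) * h \<le> s" "s < real (nat \<lfloor>s / h\<rfloor>) * h + h"
proof -
  define n where "n = nat \<lfloor>s / h\<rfloor>"
  have "real n = of_int \<lfloor>s / h\<rfloor>" using assms by (simp add: n_def)
  then have "real n \<le> s / h" "s / h < real n + 1" by linarith+
  then have "real n * h \<le> s" "s < real n * h + h"
    using assms by (simp_all add: field_simps)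
  then show "real (nat \<lfloor>s / h\<rfloor>) * h \<le> s" "s < real (nat \<lfloor>s / h\<rfloor>) * h + h"
    by (simp_all add: n_def)
qed

lemma grid_floor_less:
  fixes s h :: real
  assumes "0 \<le> s" "s < real p * h" "0 < h"
  shows "nat \<lfloor>s / h\<rfloor> < p"
proof -
  have "real (nat \<lfloor>s / h\<rfloor>) * h < real p * h"
    using grid_floor_bounds(1)[OF assms(1,3)] assms(2) by linarith
  then show ?thesis using \<open>0 < h\<close> by simp
qed

lemma cesaro_partial_sums_sublinear:
  fixes g :: "nat \<Rightarrow> 'a::real_normed_vector"
  assumes lim: "(\<lambda>N. (1 / real (N + 1)) *\<^sub>R (\<Sum>k\<le>N. g k)) \<longlonglongrightarrow> c" and \<epsilon>: "\<epsilon> > 0"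
  shows "\<exists>C. \<forall>N. norm (\<Sum>i<N. g i - c) \<le> C + \<epsilon> * real N"
proof -
  define s where "s N = (\<Sum>i<N. g i - c)" for N
  have "s (Suc N) = (\<Sum>k\<le>N. g k) - real (N + 1) *\<^sub>R c" for N
    by (simp add: s_def sum_subtractf lessThan_Suc_atMost sum_constant_scaleR)
  then have "(\<lambda>N. (1 / real (N + 1)) *\<^sub>R s (Suc N)) = (\<lambda>N. (1 / real (N + 1)) *\<^sub>R (\<Sum>k\<le>N. g k) - c)"
    by (simp add: scaleR_diff_right)
  with lim have "(\<lambda>N. (1 / real (N + 1)) *\<^sub>R s (Suc N)) \<longlonglongrightarrow> 0"
    by (simp add: LIM_zero)
  then obtain N0 where N0: "\<forall>N\<ge>N0. norm ((1 / real (N + 1)) *\<^sub>R s (Suc N) - 0) < \<epsilon>"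
    using \<epsilon> by (blast dest: LIMSEQ_D)
  define C where "C = (\<Sum>n\<le>N0. norm (s n))"
  have "norm (s n) \<le> C + \<epsilon> * real n" for n
  proof (cases "n \<le> N0")
    case True
    then have "norm (s n) \<le> C" unfolding C_def by (intro member_le_sum) auto
    moreover have "0 \<le> \<epsilon> * real n" using \<epsilon> by simp
    ultimately show ?thesis by linarith
  next
    case False
    then obtain N where "n = Suc N" "N \<ge> N0" by (cases n) auto
    then have "norm ((1 / real (N + 1)) *\<^sub>R s (Suc N)) < \<epsilon>" using N0 by simp
    with \<open>n = Suc N\<close> have "norm (s n) \<le> \<epsilon> * real n" by (simp add: field_simps)
    moreover have "C \<ge> 0" by (simp add: C_def sum_nonneg)
    ultimately show ?thesis by simp
  qed
  then show ?thesis by (auto simp: s_def)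
qed

lemma cesaro_scaled_partial_sums:
  fixes g :: "nat \<Rightarrow> 'a::real_normed_vector"
  assumes lim: "(\<lambda>N. (1 / real (N + 1)) *\<^sub>R (\<Sum>k\<le>N. g k)) \<longlonglongrightarrow> c"
    and T: "T > 0" and \<eta>: "\<eta> > 0"
  shows "\<forall>\<^sub>F h in at_right 0. \<forall>N. real N * h \<le> T \<longrightarrow> norm (h *\<^sub>R (\<Sum>i<N. g i - c)) \<le> \<eta>"
proof -
  obtain C where C: "\<And>N. norm (\<Sum>i<N. g i - c) \<le> C + \<eta> / (2 * T) * real N"
    using cesaro_partial_sums_sublinear[OF lim, of "\<eta> / (2 * T)"] T \<eta> by auto
  have "\<forall>\<^sub>F h in at_right 0. h < \<eta> / (2 * (\<bar>C\<bar> + 1))"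
    using \<eta> by (intro order_tendstoD(2)[OF tendsto_ident_at]) auto
  then show ?thesis using eventually_at_right_less[of 0]
  proof eventually_elim
    case (elim h)
    show ?case
    proof (intro allI impI)
      fix N assume NT: "real N * h \<le> T"
      have "norm (h *\<^sub>R (\<Sum>i<N. g i - c)) \<le> h * (C + \<eta> / (2 * T) * real N)"
        using C[of N] elim by (simp add: mult_left_mono)
      also have "\<dots> = h * C + \<eta> / (2 * T) * (real N * h)" by (simp add: algebra_simps)
      also have "\<dots> \<le> \<eta> / 2 + \<eta> / 2"
      proof (rule add_mono)
        have "h * C \<le> h * (\<bar>C\<bar> + 1)" using elim by (intro mult_left_mono) auto
        also have "\<dots> \<le> \<eta> / 2" using elim by (simp add: field_simps)
        finally show "h * C \<le> \<eta> / 2" .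
        show "\<eta> / (2 * T) * (real N * h) \<le> \<eta> / 2"
          using mult_left_mono[OF NT, of "\<eta> / (2 * T)"] T \<eta> by simp
      qed
      finally show "norm (h *\<^sub>R (\<Sum>i<N. g i - c)) \<le> \<eta>" by simp
    qed
  qed
qed

lemma sum_if_downclosed_eq_prefix:
  fixes v :: "nat \<Rightarrow> 'a::comm_monoid_add"
  assumes "\<And>i i'. i' \<le> i \<Longrightarrow> P i \<Longrightarrow> P i'"
  shows "\<exists>N\<le>k. (\<Sum>i<k. if P i then v i else 0) = (\<Sum>i<N. v i)"
proof (induction k)
  case 0 then show ?case by simp
next
  case (Suc k)
  then obtain N where N: "N \<le> k" "(\<Sum>i<k. if P i then v i else 0) = (\<Sum>i<N. v i)" by blast
  show ?case
  proof (cases "P k")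
    case True
    then have "\<And>i. i < Suc k \<Longrightarrow> P i" using assms by (meson less_Suc_eq_le)
    then have "(\<Sum>i<Suc k. if P i then v i else 0) = (\<Sum>i<Suc k. v i)" by simp
    then show ?thesis by blast
  next
    case False
    with N show ?thesis by (intro exI[of _ N]) auto
  qed
qed

lemma norm_sum_mono_selection_le:
  fixes v :: "nat \<Rightarrow> nat \<Rightarrow> 'a::real_normed_vector"
  assumes J: "mono J" and J_less: "\<And>i. i < k \<Longrightarrow> J i < p"
    and prefix: "\<And>j N. j < p \<Longrightarrow> N \<le> k \<Longrightarrow> norm (\<Sum>i<N. v j i) \<le> c"
  shows "norm (\<Sum>i<k. v (J i) i) \<le> 2 * real p * c"
proof -
  have below: "norm (\<Sum>i<k. if J i < m then v j i else 0) \<le> c" if "j < p" for j m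
  proof -
    have down: "J i' < m" if "i' \<le> i" "J i < m" for i i'
      using monoD[OF J that(1)] that(2) by (rule le_less_trans)
    have "\<exists>N\<le>k. (\<Sum>i<k. if J i < m then v j i else 0) = (\<Sum>i<N. v j i)"
      using down by (rule sum_if_downclosed_eq_prefix)
    then obtain N where "N \<le> k" "(\<Sum>i<k. if J i < m then v j i else 0) = (\<Sum>i<N. v j i)"
      by blast
    then show ?thesis using prefix[OF that] by simp
  qed
  have block: "norm (\<Sum>i<k. if J i = j then v j i else 0) \<le> 2 * c" if "j < p" for j
  proof -
    have "(\<Sum>i<k. if J i = j then v j i else 0)
        = (\<Sum>i<k. if J i < Suc j then v j i else 0) - (\<Sum>i<k. if J i < j then v j i else 0)"
      by (auto simp: sum_subtractf[symmetric] less_Suc_eq intro!: sum.cong)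
    then have "norm (\<Sum>i<k. if J i = j then v j i else 0)
        \<le> norm (\<Sum>i<k. if J i < Suc j then v j i else 0) + norm (\<Sum>i<k. if J i < j then v j i else 0)"
      by (simp add: norm_triangle_ineq4)
    also have "\<dots> \<le> c + c" by (intro add_mono below that)
    finally show ?thesis by simp
  qed
  have "(\<Sum>i<k. v (J i) i) = (\<Sum>i<k. \<Sum>j<p. if J i = j then v j i else 0)"
    using J_less by (intro sum.cong) (auto simp: sum.delta')
  also have "\<dots> = (\<Sum>j<p. \<Sum>i<k. if J i = j then v j i else 0)" by (rule sum.swap)
  finally have "norm (\<Sum>i<k. v (J i) i) \<le> (\<Sum>j<p. norm (\<Sum>i<k. if J i = j then v j i else 0))"
    by (simp add: norm_sum)
  also have "\<dots> \<le> (\<Sum>j<p. 2 * c)" using block by (intro sum_mono) simp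
  finally show ?thesis by simp
qed

lemma discrete_gronwall:
  fixes e :: "nat \<Rightarrow> real"
  assumes "h \<ge> 0"
    and step: "\<And>k. k \<le> K \<Longrightarrow> (\<And>i. i < k \<Longrightarrow> e i \<le> \<rho> * (1 + h) ^ i) \<Longrightarrow> e k \<le> \<rho> + h * (\<Sum>i<k. e i)"
    and "k \<le> K"
  shows "e k \<le> \<rho> * (1 + h) ^ k"
  using \<open>k \<le> K\<close>
proof (induction k rule: less_induct)
  case (less k)
  have geometric: "\<rho> + h * (\<Sum>i<n. \<rho> * (1 + h) ^ i) = \<rho> * (1 + h) ^ n" for n
    by (induction n) (simp_all add: algebra_simps)
  have "e k \<le> \<rho> + h * (\<Sum>i<k. e i)" using less by (intro step) auto
  also have "\<dots> \<le> \<rho> + h * (\<Sum>i<k. \<rho> * (1 + h) ^ i)"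
    using less \<open>h \<ge> 0\<close> by (intro add_left_mono mult_left_mono sum_mono) auto
  finally show ?case unfolding geometric .
qed

lemma tendsto_SUP_norm_zero:
  fixes g :: "'a \<Rightarrow> 'b \<Rightarrow> 'c::real_normed_vector"
  assumes "S \<noteq> {}" and uniform: "\<And>\<eta>. \<eta> > 0 \<Longrightarrow> \<forall>\<^sub>F h in F. \<forall>t\<in>S. norm (g h t) \<le> \<eta>"
  shows "((\<lambda>h. SUP t\<in>S. norm (g h t)) \<longlongrightarrow> 0) F"
  unfolding tendsto_iff
proof (intro allI impI)
  fix \<eta> :: real assume "\<eta> > 0"
  then have "\<forall>\<^sub>F h in F. \<forall>t\<in>S. norm (g h t) \<le> \<eta> / 2" by (intro uniform) simp
  then show "\<forall>\<^sub>F h in F. dist (SUP t\<in>S. norm (g h t)) 0 < \<eta>"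
  proof eventually_elim
    case (elim h)
    have "(SUP t\<in>S. norm (g h t)) \<le> \<eta> / 2" using elim \<open>S \<noteq> {}\<close> by (intro cSUP_least) auto
    moreover have "bdd_above ((\<lambda>t. norm (g h t)) ` S)" using elim by (intro bdd_aboveI2[where M = "\<eta> / 2"]) auto
    then have "0 \<le> (SUP t\<in>S. norm (g h t))"
      using \<open>S \<noteq> {}\<close> by (metis cSUP_upper2 ex_in_conv norm_ge_zero)
    ultimately show ?case using \<open>\<eta> > 0\<close> by simp
  qed
qed

lemma set_integrable_bounded_continuous:
  fixes g :: "'b::topological_space \<Rightarrow> 'a::{banach, second_countable_topology}"
  assumes "finite_measure \<mu>" "sets \<mu> = sets borel" "S \<in> sets \<mu>"
    and "continuous_on UNIV g" "bounded (range g)"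
  shows "set_integrable \<mu> S g"
proof -
  interpret finite_measure \<mu> by fact
  have "g \<in> borel_measurable borel"
    using \<open>continuous_on UNIV g\<close> by (rule borel_measurable_continuous_onI)
  then have "g \<in> borel_measurable \<mu>"
    by (simp only: measurable_cong_sets[OF \<open>sets \<mu> = sets borel\<close> refl])
  moreover obtain b where "\<And>y. norm (g y) \<le> b" using \<open>bounded (range g)\<close> by (auto simp: bounded_iff)
  ultimately have "integrable \<mu> g" by (intro integrable_const_bound[of _ b]) auto
  with \<open>S \<in> sets \<mu>\<close> show ?thesis
    unfolding set_integrable_def by (rule integrable_mult_indicator)
qed

lemma norm_set_integral_le_prob:
  fixes g :: "'b::topological_space \<Rightarrow> 'a::{banach, second_countable_topology}"
  assumes "prob_space \<mu>" "sets \<mu> = sets borel" "S \<in> sets \<mu>" "emeasure \<mu> S = 1"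
    and "continuous_on UNIV g" "bounded (range g)" and bound: "\<And>y. y \<in> S \<Longrightarrow> norm (g y) \<le> c"
  shows "norm (LINT y:S|\<mu>. g y) \<le> c"
proof -
  interpret prob_space \<mu> by fact
  have g: "set_integrable \<mu> S g" using assms by (intro set_integrable_bounded_continuous) auto
  have "norm (LINT y:S|\<mu>. g y) \<le> (LINT y:S|\<mu>. norm (g y))"
    by (rule set_integral_norm_bound[OF g])
  also have "\<dots> \<le> (LINT y:S|\<mu>. c)"
  proof (rule set_integral_mono)
    show "set_integrable \<mu> S (\<lambda>_. c)"
      unfolding set_integrable_def using \<open>S \<in> sets \<mu>\<close> by (rule integrable_mult_indicator) simp
  qed (use bound g in \<open>auto simp: set_integrable_norm\<close>)
  also have "\<dots> = c" using assms by (simp add: set_integral_const emeasure_eq_measure)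
  finally show ?thesis .
qed

lemma Xseq_eq_sum:
  "Xseq f Y x h \<omega> k = x + h *\<^sub>R (\<Sum>i<k. f (Xseq f Y x h \<omega> i) (Y (Suc i) \<omega>))"
proof (induction k)
  case (Suc k)
  let ?F = "\<lambda>i. f (Xseq f Y x h \<omega> i) (Y (Suc i) \<omega>)"
  have "Xseq f Y x h \<omega> (Suc k) = Xseq f Y x h \<omega> k + h *\<^sub>R ?F k" by (rule Xseq.simps(2))
  also have "\<dots> = x + h *\<^sub>R (\<Sum>i<k. ?F i) + h *\<^sub>R ?F k" by (subst (1) Suc.IH) (rule refl)
  also have "\<dots> = x + h *\<^sub>R (\<Sum>i<Suc k. ?F i)" by (simp only: sum.lessThan_Suc scaleR_add_right add.assoc)
  finally show ?case .
qed simp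

locale averaging_tube =
  fixes f :: "'n::real_normed_vector \<Rightarrow> 'm \<Rightarrow> 'n" and fbar :: "'n \<Rightarrow> 'n" and Xc :: "real \<Rightarrow> 'n"
    and SY :: "'m set" and D :: "'n set" and T L B :: real and x :: 'n
  assumes T_pos: "T > 0" and L_pos: "L > 0" and B_pos: "B > 0"
    and f_lipschitz: "\<And>a b y. a \<in> D \<Longrightarrow> b \<in> D \<Longrightarrow> y \<in> SY \<Longrightarrow> norm (f a y - f b y) \<le> L * norm (a - b)"
    and fbar_lipschitz: "\<And>a b. a \<in> D \<Longrightarrow> b \<in> D \<Longrightarrow> norm (fbar a - fbar b) \<le> L * norm (a - b)"
    and fbar_bounded: "\<And>a. a \<in> D \<Longrightarrow> norm (fbar a) \<le> B"
    and tube: "\<And>s. 0 \<le> s \<Longrightarrow> s \<le> T \<Longrightarrow> cball (Xc s) 1 \<subseteq> D"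
    and Xc_ode: "\<And>t. 0 \<le> t \<Longrightarrow> (Xc has_vector_derivative fbar (Xc t)) (at t within {0..})"
    and Xc_0: "Xc 0 = x"
begin

lemma Xc_in_tube: "0 \<le> s \<Longrightarrow> s \<le> T \<Longrightarrow> Xc s \<in> D"
  using tube[of s] by auto

lemma Xc_increment_error:
  assumes "0 \<le> a" "a \<le> b" "b \<le> T"
    and C: "\<And>s. a \<le> s \<Longrightarrow> s \<le> b \<Longrightarrow> norm (fbar (Xc s) - fbar (Xc a)) \<le> C"
  shows "norm (Xc b - Xc a - (b - a) *\<^sub>R fbar (Xc a)) \<le> (b - a) * C"
proof -
  have "norm (Xc b - Xc a - (b - a) *\<^sub>R fbar (Xc a)) \<le> norm (b - a) * C"
  proof (rule vector_differentiable_bound_linearization[where S = "{a..b}"])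
    fix s assume "s \<in> {a..b}"
    then show "(Xc has_vector_derivative fbar (Xc s)) (at s within {a..b})"
      using Xc_ode[of s] assms by (auto intro: has_vector_derivative_within_subset)
  qed (use assms in \<open>auto simp: closed_segment_eq_real_ivl\<close>)
  then show ?thesis using assms by simp
qed

lemma Xc_lipschitz:
  assumes "a \<in> {0..T}" "b \<in> {0..T}"
  shows "norm (Xc b - Xc a) \<le> B * \<bar>b - a\<bar>"
proof -
  have "norm (Xc b - Xc a) \<le> B * norm (b - a)"
  proof (rule differentiable_bound[where S = "{0..T}" and f' = "\<lambda>s r. r *\<^sub>R fbar (Xc s)"])
    fix s assume s: "s \<in> {0..T}"
    then show "(Xc has_derivative (\<lambda>r. r *\<^sub>R fbar (Xc s))) (at s within {0..T})"
      using Xc_ode[of s] by (auto simp: has_vector_derivative_def intro: has_derivative_subset)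
    have "onorm (\<lambda>r. r *\<^sub>R fbar (Xc s)) = norm (fbar (Xc s))"
      using onorm_scaleR_left[OF bounded_linear_ident, of "fbar (Xc s)"] by (simp add: onorm_id)
    then show "onorm (\<lambda>r. r *\<^sub>R fbar (Xc s)) \<le> B"
      using s by (simp add: fbar_bounded Xc_in_tube)
  qed (use assms in auto)
  then show ?thesis by simp
qed

lemma Xc_euler_step_error:
  assumes "0 \<le> a" "a \<le> b" "b \<le> T"
  shows "norm (Xc b - Xc a - (b - a) *\<^sub>R fbar (Xc a)) \<le> L * B * (b - a)\<^sup>2"
proof -
  have "norm (Xc b - Xc a - (b - a) *\<^sub>R fbar (Xc a)) \<le> (b - a) * (L * (B * (b - a)))"
  proof (rule Xc_increment_error[OF assms])
    fix s assume s: "a \<le> s" "s \<le> b"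
    have "norm (fbar (Xc s) - fbar (Xc a)) \<le> L * norm (Xc s - Xc a)"
      using s assms by (intro fbar_lipschitz Xc_in_tube) auto
    also have "\<dots> \<le> L * (B * (s - a))"
      using Xc_lipschitz[of a s] s assms L_pos by (intro mult_left_mono) auto
    also have "\<dots> \<le> L * (B * (b - a))"
      using s L_pos B_pos by (intro mult_left_mono) auto
    finally show "norm (fbar (Xc s) - fbar (Xc a)) \<le> L * (B * (b - a))" .
  qed
  then show ?thesis by (simp add: power2_eq_square algebra_simps)
qed

lemma Xc_riemann_sum_error:
  assumes h: "h > 0" and "real k * h \<le> T"
  shows "norm (Xc (real k * h) - x - h *\<^sub>R (\<Sum>i<k. fbar (Xc (real i * h))))
           \<le> L * B * h * (real k * h)"
  using assms(2)
proof (induction k)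
  case 0
  then show ?case by (simp add: Xc_0)
next
  case (Suc k)
  let ?step = "Xc (real (Suc k) * h) - Xc (real k * h) - h *\<^sub>R fbar (Xc (real k * h))"
  have "real k * h \<le> T" using Suc.prems h by (simp add: algebra_simps)
  then have IH: "norm (Xc (real k * h) - x - h *\<^sub>R (\<Sum>i<k. fbar (Xc (real i * h))))
                   \<le> L * B * h * (real k * h)" by (rule Suc.IH)
  have "norm ?step \<le> L * B * h\<^sup>2"
    using Xc_euler_step_error[of "real k * h" "real (Suc k) * h"] Suc.prems h
    by (simp add: algebra_simps)
  moreover have "Xc (real (Suc k) * h) - x - h *\<^sub>R (\<Sum>i<Suc k. fbar (Xc (real i * h)))
      = (Xc (real k * h) - x - h *\<^sub>R (\<Sum>i<k. fbar (Xc (real i * h)))) + ?step"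
    by (simp add: scaleR_add_right algebra_simps)
  ultimately show ?case
    using IH norm_triangle_ineq[of "Xc (real k * h) - x - h *\<^sub>R (\<Sum>i<k. fbar (Xc (real i * h)))" ?step]
    by (simp add: algebra_simps power2_eq_square)
qed

lemma deviation_along_Xc_lipschitz:
  assumes "s \<in> {0..T}" "s' \<in> {0..T}" "y \<in> SY"
  shows "norm ((f (Xc s) y - fbar (Xc s)) - (f (Xc s') y - fbar (Xc s'))) \<le> 2 * L * B * \<bar>s - s'\<bar>"
proof -
  have "norm ((f (Xc s) y - fbar (Xc s)) - (f (Xc s') y - fbar (Xc s')))
          \<le> norm (f (Xc s) y - f (Xc s') y) + norm (fbar (Xc s) - fbar (Xc s'))"
    using norm_triangle_ineq4[of "f (Xc s) y - f (Xc s') y" "fbar (Xc s) - fbar (Xc s')"]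
    by (simp add: algebra_simps)
  also have "\<dots> \<le> L * norm (Xc s - Xc s') + L * norm (Xc s - Xc s')"
    using assms by (intro add_mono f_lipschitz fbar_lipschitz Xc_in_tube) auto
  also have "\<dots> \<le> L * (B * \<bar>s - s'\<bar>) + L * (B * \<bar>s - s'\<bar>)"
    using Xc_lipschitz[OF assms(2,1)] L_pos by (intro add_mono mult_left_mono) auto
  finally show ?thesis by (simp add: mult_ac)
qed

lemma deviation_sum_grid_bound:
  fixes y :: "nat \<Rightarrow> 'm"
  assumes y_SY: "\<And>i. y i \<in> SY" and h: "h > 0" and kT: "real k * h \<le> T" and p: "p > 0"
    and cells: "\<And>j N. j < p \<Longrightarrow> N \<le> k \<Longrightarrow>
      norm (h *\<^sub>R (\<Sum>i<N. f (Xc (real j * T / real p)) (y i) - fbar (Xc (real j * T / real p)))) \<le> c"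
  shows "norm (h *\<^sub>R (\<Sum>i<k. f (Xc (real i * h)) (y i) - fbar (Xc (real i * h))))
           \<le> 2 * real p * c + 2 * L * B * T * (T / real p)"
proof -
  define \<Delta> where "\<Delta> = T / real p"
  have \<Delta>: "\<Delta> > 0" using T_pos p by (simp add: \<Delta>_def)
  define dev where "dev s i = f (Xc s) (y i) - fbar (Xc s)" for s i
  define J where "J i = nat \<lfloor>real i * h / \<Delta>\<rfloor>" for i
  have "mono J"
    unfolding J_def mono_def using h \<Delta> by (auto intro!: nat_mono floor_mono divide_right_mono)
  have J_grid: "J i < p" "real (J i) * \<Delta> \<in> {0..T}" "real i * h \<in> {0..T}"
    "\<bar>real i * h - real (J i) * \<Delta>\<bar> \<le> \<Delta>" if "i < k" for i
  proof -
    have "real i * h < real k * h" using that h by simp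
    then have "real i * h < T" using kT by linarith
    then have "0 \<le> real i * h" "real i * h < real p * \<Delta>"
      using h p by (simp_all add: \<Delta>_def)
    then show "J i < p" "real (J i) * \<Delta> \<in> {0..T}" "real i * h \<in> {0..T}"
      "\<bar>real i * h - real (J i) * \<Delta>\<bar> \<le> \<Delta>"
      unfolding J_def using grid_floor_bounds[of "real i * h" \<Delta>] grid_floor_less \<Delta> p
      by (auto simp: \<Delta>_def)
  qed
  have frozen: "norm (h *\<^sub>R (\<Sum>i<k. dev (real (J i) * \<Delta>) i)) \<le> 2 * real p * c"
  proof -
    have "norm (\<Sum>i<k. h *\<^sub>R dev (real (J i) * \<Delta>) i) \<le> 2 * real p * c"
    proof (rule norm_sum_mono_selection_le[OF \<open>mono J\<close> J_grid(1)])
      fix j N assume "j < p" "N \<le> k"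
      moreover have "real j * \<Delta> = real j * T / real p" by (simp add: \<Delta>_def)
      ultimately show "norm (\<Sum>i<N. h *\<^sub>R dev (real j * \<Delta>) i) \<le> c"
        using cells by (simp add: dev_def scaleR_sum_right)
    qed
    then show ?thesis by (simp add: scaleR_sum_right)
  qed
  have "norm (dev (real i * h) i - dev (real (J i) * \<Delta>) i) \<le> 2 * L * B * \<Delta>" if "i < k" for i
  proof -
    have "norm (dev (real i * h) i - dev (real (J i) * \<Delta>) i) \<le> 2 * L * B * \<bar>real i * h - real (J i) * \<Delta>\<bar>"
      unfolding dev_def using J_grid[OF that] by (intro deviation_along_Xc_lipschitz y_SY)
    also have "\<dots> \<le> 2 * L * B * \<Delta>"
      using J_grid[OF that] L_pos B_pos by (intro mult_left_mono) auto
    finally show ?thesis .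
  qed
  then have "norm (\<Sum>i<k. dev (real i * h) i - dev (real (J i) * \<Delta>) i) \<le> (\<Sum>i<k. 2 * L * B * \<Delta>)"
    by (intro order_trans[OF norm_sum sum_mono]) auto
  then have freeze_error: "norm (h *\<^sub>R (\<Sum>i<k. dev (real i * h) i - dev (real (J i) * \<Delta>) i))
                             \<le> (real k * h) * (2 * L * B * \<Delta>)"
    using h by (simp add: mult_left_mono mult.assoc mult.left_commute)
  have "h *\<^sub>R (\<Sum>i<k. dev (real i * h) i)
      = h *\<^sub>R (\<Sum>i<k. dev (real i * h) i - dev (real (J i) * \<Delta>) i) + h *\<^sub>R (\<Sum>i<k. dev (real (J i) * \<Delta>) i)"
    by (simp add: sum_subtractf scaleR_diff_right)
  then have "norm (h *\<^sub>R (\<Sum>i<k. dev (real i * h) i))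
      \<le> norm (h *\<^sub>R (\<Sum>i<k. dev (real i * h) i - dev (real (J i) * \<Delta>) i))
        + norm (h *\<^sub>R (\<Sum>i<k. dev (real (J i) * \<Delta>) i))"
    by (simp only: norm_triangle_ineq)
  also have "\<dots> \<le> (real k * h) * (2 * L * B * \<Delta>) + 2 * real p * c"
    using freeze_error frozen by (rule add_mono)
  also have "\<dots> \<le> T * (2 * L * B * \<Delta>) + 2 * real p * c"
    using kT L_pos B_pos \<Delta> by (intro add_right_mono mult_right_mono) auto
  finally have "norm (h *\<^sub>R (\<Sum>i<k. dev (real i * h) i)) \<le> 2 * real p * c + 2 * L * B * T * \<Delta>"
    by (simp add: mult_ac)
  then show ?thesis by (simp add: dev_def \<Delta>_def add.commute)
qed

lemma averaging_along_Xc: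
  fixes y :: "nat \<Rightarrow> 'm"
  assumes y_SY: "\<And>i. y i \<in> SY"
    and ergodic: "\<And>j p. (\<lambda>N. (1 / real (N + 1)) *\<^sub>R (\<Sum>k\<le>N. f (Xc (real j * T / real p)) (y k)))
                         \<longlonglongrightarrow> fbar (Xc (real j * T / real p))"
    and \<delta>: "\<delta> > 0"
  shows "\<forall>\<^sub>F h in at_right 0. \<forall>k. real k * h \<le> T \<longrightarrow>
           norm (h *\<^sub>R (\<Sum>i<k. f (Xc (real i * h)) (y i) - fbar (Xc (real i * h)))) \<le> \<delta>"
proof -
  define p :: nat where "p = nat \<lceil>4 * L * B * T\<^sup>2 / \<delta>\<rceil> + 1"
  have p: "p > 0" by (simp add: p_def)
  have "4 * L * B * T\<^sup>2 / \<delta> \<le> real p" unfolding p_def by linarith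
  then have grid_small: "2 * L * B * T * (T / real p) \<le> \<delta> / 2"
    using p \<delta> by (simp add: field_simps power2_eq_square)
  have "\<forall>\<^sub>F h in at_right 0. \<forall>j\<in>{..<p}. \<forall>N. real N * h \<le> T \<longrightarrow>
          norm (h *\<^sub>R (\<Sum>i<N. f (Xc (real j * T / real p)) (y i) - fbar (Xc (real j * T / real p))))
            \<le> \<delta> / (4 * real p)"
    using p \<delta> by (intro eventually_ball_finite ballI cesaro_scaled_partial_sums[OF ergodic T_pos]) auto
  then show ?thesis using eventually_at_right_less[of 0]
  proof eventually_elim
    case (elim h)
    show ?case
    proof (intro allI impI)
      fix k assume kT: "real k * h \<le> T"
      have "norm (h *\<^sub>R (\<Sum>i<k. f (Xc (real i * h)) (y i) - fbar (Xc (real i * h))))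
              \<le> 2 * real p * (\<delta> / (4 * real p)) + 2 * L * B * T * (T / real p)"
      proof (rule deviation_sum_grid_bound[OF y_SY _ kT p])
        fix j N assume "j < p" "N \<le> k"
        then have "real N * h \<le> T" using kT elim by (meson mult_right_mono of_nat_le_iff order_trans less_imp_le)
        then show "norm (h *\<^sub>R (\<Sum>i<N. f (Xc (real j * T / real p)) (y i) - fbar (Xc (real j * T / real p))))
                     \<le> \<delta> / (4 * real p)"
          using elim \<open>j < p\<close> by blast
      qed (use elim in simp)
      also have "\<dots> \<le> \<delta>" using p grid_small by simp
      finally show "norm (h *\<^sub>R (\<Sum>i<k. f (Xc (real i * h)) (y i) - fbar (Xc (real i * h)))) \<le> \<delta>" .
    qed
  qed
qed

lemma euler_error_recursion:
  assumes y_SY: "\<And>i. Y (Suc i) \<omega> \<in> SY" and h: "h > 0" and nT: "real n * h \<le> T"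
    and in_tube: "\<And>i. i < n \<Longrightarrow> Xseq f Y x h \<omega> i \<in> D"
    and averaging: "norm (h *\<^sub>R (\<Sum>i<n. f (Xc (real i * h)) (Y (Suc i) \<omega>) - fbar (Xc (real i * h)))) \<le> \<delta>"
  shows "norm (Xseq f Y x h \<omega> n - Xc (real n * h))
           \<le> \<delta> + L * B * T * h + h * L * (\<Sum>i<n. norm (Xseq f Y x h \<omega> i - Xc (real i * h)))"
proof -
  define X where "X i = Xseq f Y x h \<omega> i" for i
  define S1 where "S1 = (\<Sum>i<n. f (X i) (Y (Suc i) \<omega>) - f (Xc (real i * h)) (Y (Suc i) \<omega>))"
  define S2 where "S2 = (\<Sum>i<n. f (Xc (real i * h)) (Y (Suc i) \<omega>) - fbar (Xc (real i * h)))"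
  define R where "R = Xc (real n * h) - x - h *\<^sub>R (\<Sum>i<n. fbar (Xc (real i * h)))"
  have "X n - Xc (real n * h) = h *\<^sub>R S1 + h *\<^sub>R S2 - R"
    unfolding X_def S1_def S2_def R_def Xseq_eq_sum[of f Y x h \<omega> n]
    by (simp add: sum_subtractf algebra_simps)
  then have "norm (X n - Xc (real n * h)) \<le> norm (h *\<^sub>R S1) + norm (h *\<^sub>R S2) + norm R"
    by (metis norm_triangle_ineq norm_triangle_ineq4 add_right_mono order_trans)
  moreover have "norm (h *\<^sub>R S1) \<le> h * L * (\<Sum>i<n. norm (X i - Xc (real i * h)))"
  proof -
    have "norm S1 \<le> (\<Sum>i<n. L * norm (X i - Xc (real i * h)))"
      unfolding S1_def
    proof (rule order_trans[OF norm_sum sum_mono])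
      fix i assume "i \<in> {..<n}"
      moreover have "real i * h \<le> T" using \<open>i \<in> {..<n}\<close> nT h
        by (meson lessThan_iff less_imp_le mult_right_mono of_nat_le_iff order_trans less_imp_le)
      ultimately show "norm (f (X i) (Y (Suc i) \<omega>) - f (Xc (real i * h)) (Y (Suc i) \<omega>))
                         \<le> L * norm (X i - Xc (real i * h))"
        unfolding X_def using h by (intro f_lipschitz in_tube Xc_in_tube y_SY) auto
    qed
    then have "h * norm S1 \<le> h * (\<Sum>i<n. L * norm (X i - Xc (real i * h)))"
      using h by (intro mult_left_mono) auto
    then show ?thesis using h by (simp add: sum_distrib_left mult.assoc)
  qed
  moreover have "norm (h *\<^sub>R S2) \<le> \<delta>" using averaging by (simp add: S2_def)
  moreover have "norm R \<le> L * B * T * h"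
  proof -
    have "norm R \<le> L * B * h * (real n * h)" unfolding R_def by (rule Xc_riemann_sum_error[OF h nT])
    also have "\<dots> \<le> L * B * h * T" using nT h L_pos B_pos by (intro mult_left_mono) auto
    finally show ?thesis by (simp add: mult_ac)
  qed
  ultimately show ?thesis unfolding X_def by linarith
qed

lemma euler_error:
  assumes y_SY: "\<And>i. Y (Suc i) \<omega> \<in> SY" and h: "h > 0"
    and averaging: "\<And>k. real k * h \<le> T \<Longrightarrow>
          norm (h *\<^sub>R (\<Sum>i<k. f (Xc (real i * h)) (Y (Suc i) \<omega>) - fbar (Xc (real i * h)))) \<le> \<delta>"
    and small: "(\<delta> + L * B * T * h) * exp (L * T) \<le> 1"
    and kT: "real k * h \<le> T"
  shows "norm (Xseq f Y x h \<omega> k - Xc (real k * h)) \<le> (\<delta> + L * B * T * h) * exp (L * T)"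
proof -
  define \<rho> where "\<rho> = \<delta> + L * B * T * h"
  define e where "e i = norm (Xseq f Y x h \<omega> i - Xc (real i * h))" for i
  define K where "K = nat \<lfloor>T / h\<rfloor>"
  have K_iff: "real i * h \<le> T \<longleftrightarrow> i \<le> K" for i
    using h T_pos by (simp add: K_def le_nat_iff le_floor_iff pos_le_divide_eq)
  have "\<delta> \<ge> 0" using averaging[of 0] T_pos by simp
  then have "\<rho> \<ge> 0" using L_pos B_pos T_pos h by (simp add: \<rho>_def)
  have growth: "\<rho> * (1 + h * L) ^ i \<le> \<rho> * exp (L * T)" if "i \<le> K" for i
  proof -
    have "(1 + h * L) ^ i \<le> exp (h * L) ^ i"
      using h L_pos by (intro power_mono exp_ge_add_one_self) auto
    also have "\<dots> = exp ((real i * h) * L)" by (simp add: exp_of_nat_mult[symmetric] mult.assoc)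
    also have "\<dots> \<le> exp (L * T)" using K_iff[of i] that L_pos by (simp add: mult.commute)
    finally show ?thesis using \<open>\<rho> \<ge> 0\<close> by (intro mult_left_mono)
  qed
  have "e k \<le> \<rho> * (1 + h * L) ^ k"
  proof (rule discrete_gronwall[where K = K])
    show "0 \<le> h * L" using h L_pos by simp
    show "k \<le> K" using kT K_iff by simp
  next
    fix n assume "n \<le> K" and IH: "\<And>i. i < n \<Longrightarrow> e i \<le> \<rho> * (1 + h * L) ^ i"
    have "Xseq f Y x h \<omega> i \<in> D" if "i < n" for i
    proof -
      have "real i * h \<le> T" using \<open>n \<le> K\<close> that K_iff by simp
      moreover have "e i \<le> 1" using IH[OF that] growth[of i] small \<open>n \<le> K\<close> that by (simp add: \<rho>_def)
      ultimately show ?thesis using tube[of "real i * h"] h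
        by (auto simp: e_def dist_norm norm_minus_commute)
    qed
    then show "e n \<le> \<rho> + h * L * (\<Sum>i<n. e i)"
      unfolding e_def \<rho>_def using \<open>n \<le> K\<close> K_iff
      by (intro euler_error_recursion y_SY h averaging) auto
  qed
  then show ?thesis using growth[of k] kT K_iff by (simp add: e_def \<rho>_def)
qed

lemma euler_uniform_convergence:
  assumes y_SY: "\<And>i. Y (Suc i) \<omega> \<in> SY"
    and averaging: "\<And>\<delta>. \<delta> > 0 \<Longrightarrow> \<forall>\<^sub>F h in at_right 0. \<forall>k. real k * h \<le> T \<longrightarrow>
          norm (h *\<^sub>R (\<Sum>i<k. f (Xc (real i * h)) (Y (Suc i) \<omega>) - fbar (Xc (real i * h)))) \<le> \<delta>"
    and \<eta>: "\<eta> > 0"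
  shows "\<forall>\<^sub>F h in at_right 0. \<forall>t\<in>{0..T}. norm (Xpc f Y x h \<omega> t - Xc t) \<le> \<eta>"
proof -
  define E where "E = exp (L * T)"
  \<comment> \<open>an error below 1 keeps the Euler iterates inside the tube\<close>
  define \<eta>' where "\<eta>' = min \<eta> 1"
  have E: "E > 0" and \<eta>': "0 < \<eta>'" "\<eta>' \<le> \<eta>" "\<eta>' \<le> 1"
    using \<eta> by (auto simp: E_def \<eta>'_def)
  have "\<forall>\<^sub>F h in at_right 0. h < min (\<eta>' / (3 * L * B * T * E)) (\<eta> / (3 * B))"
    using \<eta> \<eta>' E L_pos B_pos T_pos by (intro order_tendstoD(2)[OF tendsto_ident_at]) auto
  moreover have "\<forall>\<^sub>F h in at_right 0. \<forall>k. real k * h \<le> T \<longrightarrow>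
       norm (h *\<^sub>R (\<Sum>i<k. f (Xc (real i * h)) (Y (Suc i) \<omega>) - fbar (Xc (real i * h)))) \<le> \<eta>' / (3 * E)"
    using \<eta>' E by (intro averaging) simp
  ultimately show ?thesis using eventually_at_right_less[of 0]
  proof eventually_elim
    case (elim h)
    then have h: "h > 0" and h_small: "L * B * T * h * E \<le> \<eta>' / 3" "B * h \<le> \<eta> / 3"
      using E L_pos B_pos T_pos by (auto simp: field_simps)
    have total: "(\<eta>' / (3 * E) + L * B * T * h) * exp (L * T) \<le> 2 * \<eta>' / 3"
      using h_small E by (simp add: E_def[symmetric] distrib_right)
    show ?case
    proof
      fix t assume t: "t \<in> {0..T}"
      define k where "k = nat \<lfloor>t / h\<rfloor>"
      have k: "real k * h \<le> t" "t < real k * h + h"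
        unfolding k_def using grid_floor_bounds[of t h] t h by auto
      then have "real k * h \<le> T" using t by simp
      have "norm (Xseq f Y x h \<omega> k - Xc (real k * h)) \<le> 2 * \<eta>' / 3"
        using euler_error[where Y = Y and \<omega> = \<omega> and h = h and k = k and \<delta> = "\<eta>' / (3 * E)",
          OF y_SY h _ _ \<open>real k * h \<le> T\<close>] elim total \<eta>' by fastforce
      moreover have "norm (Xc (real k * h) - Xc t) \<le> B * \<bar>real k * h - t\<bar>"
        using t \<open>real k * h \<le> T\<close> h by (intro Xc_lipschitz) auto
      moreover have "B * \<bar>real k * h - t\<bar> \<le> B * h" using k B_pos by (intro mult_left_mono) auto
      moreover have "Xpc f Y x h \<omega> t = Xseq f Y x h \<omega> k" by (simp add: Xpc_def k_def)
      ultimately show "norm (Xpc f Y x h \<omega> t - Xc t) \<le> \<eta>"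
        using h_small \<eta>' norm_triangle_ineq[of "Xseq f Y x h \<omega> k - Xc (real k * h)" "Xc (real k * h) - Xc t"]
        by simp
    qed
  qed
qed

end


lemma compact_neighbourhood_of_path:
  fixes \<gamma> :: "real \<Rightarrow> 'a::{real_normed_vector, heine_borel}"
  assumes "continuous_on S \<gamma>" "compact S"
  shows "\<exists>D. compact D \<and> (\<forall>s\<in>S. cball (\<gamma> s) 1 \<subseteq> D)"
proof (intro exI conjI ballI)
  let ?D = "{a + b | a b. a \<in> \<gamma> ` S \<and> b \<in> cball 0 1}"
  show "compact ?D" using assms by (intro compact_sums compact_continuous_image compact_cball)
  fix s assume "s \<in> S"
  show "cball (\<gamma> s) 1 \<subseteq> ?D"
  proof
    fix z assume "z \<in> cball (\<gamma> s) 1"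
    then have "z = \<gamma> s + (z - \<gamma> s) \<and> \<gamma> s \<in> \<gamma> ` S \<and> z - \<gamma> s \<in> cball 0 1"
      using \<open>s \<in> S\<close> by (auto simp: dist_norm norm_minus_commute)
    then show "z \<in> ?D" by blast
  qed
qed

lemma uniform_bound_from_lipschitz:
  fixes f :: "'a::real_normed_vector \<Rightarrow> 'b \<Rightarrow> 'c::real_normed_vector"
  assumes "bounded D" "z \<in> D" "bounded (range (f z))" "L \<ge> 0"
    and lip: "\<And>a y. a \<in> D \<Longrightarrow> y \<in> S \<Longrightarrow> norm (f a y - f z y) \<le> L * norm (a - z)"
  shows "\<exists>B>0. \<forall>a\<in>D. \<forall>y\<in>S. norm (f a y) \<le> B"
proof -
  obtain Bx where Bx: "\<And>y. norm (f z y) \<le> Bx" using assms(3) by (auto simp: bounded_iff)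
  obtain R where R: "\<And>a. a \<in> D \<Longrightarrow> norm (a - z) \<le> R"
    using bounded_any_center[of D z] \<open>bounded D\<close> by (auto simp: dist_norm norm_minus_commute)
  have "0 \<le> R" using R[OF \<open>z \<in> D\<close>] by simp
  have "norm (f a y) \<le> \<bar>Bx\<bar> + L * R + 1" if "a \<in> D" "y \<in> S" for a y
  proof -
    have "norm (f a y) \<le> norm (f z y) + norm (f a y - f z y)" by (rule norm_triangle_sub)
    also have "\<dots> \<le> Bx + L * norm (a - z)" using Bx lip[OF that] by (rule add_mono)
    also have "\<dots> \<le> \<bar>Bx\<bar> + L * R"
      using R[OF that(1)] \<open>L \<ge> 0\<close> by (intro add_mono mult_left_mono) auto
    finally show ?thesis by simp
  qed
  moreover have "\<bar>Bx\<bar> + L * R + 1 > 0" using \<open>L \<ge> 0\<close> \<open>0 \<le> R\<close> by (simp add: add_nonneg_pos)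
  ultimately show ?thesis by (intro exI[of _ "\<bar>Bx\<bar> + L * R + 1"]) auto
qed

lemma averaged_field_bounds:
  fixes f :: "'a \<Rightarrow> 'b::topological_space \<Rightarrow> 'c::{banach, second_countable_topology}"
  assumes \<mu>: "prob_space \<mu>" "sets \<mu> = sets borel" "S \<in> sets \<mu>" "emeasure \<mu> S = 1"
    and cont: "\<And>a. continuous_on UNIV (f a)" and bdd: "\<And>a. bounded (range (f a))"
    and fbar_def: "\<And>a. fbar a = (LINT y:S|\<mu>. f a y)"
  shows "(\<And>y. y \<in> S \<Longrightarrow> norm (f a y) \<le> c) \<Longrightarrow> norm (fbar a) \<le> c"
    and "(\<And>y. y \<in> S \<Longrightarrow> norm (f a y - f b y) \<le> c) \<Longrightarrow> norm (fbar a - fbar b) \<le> c"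
proof -
  show "norm (fbar a) \<le> c" if "\<And>y. y \<in> S \<Longrightarrow> norm (f a y) \<le> c"
    unfolding fbar_def by (rule norm_set_integral_le_prob[OF \<mu> cont bdd that])
  show "norm (fbar a - fbar b) \<le> c" if "\<And>y. y \<in> S \<Longrightarrow> norm (f a y - f b y) \<le> c"
  proof -
    have "set_integrable \<mu> S (f a')" for a'
      using \<mu> cont bdd by (intro set_integrable_bounded_continuous prob_space.axioms(1))
    then have "fbar a - fbar b = (LINT y:S|\<mu>. f a y - f b y)"
      unfolding fbar_def by (simp add: set_integral_diff)
    moreover have "continuous_on UNIV (\<lambda>y. f a y - f b y)" "bounded (range (\<lambda>y. f a y - f b y))"
      using cont bdd by (auto intro: continuous_on_diff bounded_minus_comp)
    ultimately show ?thesis using that by (auto intro!: norm_set_integral_le_prob[OF \<mu>])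
  qed
qed

lemma averaging_tube_exists:
  fixes f :: "'n::euclidean_space \<Rightarrow> 'm::euclidean_space \<Rightarrow> 'n"
  assumes T: "T > 0"
    and f_cont: "continuous_on UNIV (\<lambda>(x, y). f x y)"
    and f_bdd: "\<And>x. bounded (range (f x))"
    and f_lip: "\<And>D. compact D \<Longrightarrow> \<exists>k. \<forall>x1\<in>D. \<forall>x2\<in>D. \<forall>y\<in>SY. norm (f x1 y - f x2 y) \<le> k * norm (x1 - x2)"
    and \<mu>: "prob_space \<mu>" "sets \<mu> = sets borel" "SY \<in> sets \<mu>" "emeasure \<mu> SY = 1"
    and fbar_def: "\<And>x. fbar x = (LINT y:SY|\<mu>. f x y)"
    and Xc_ode: "\<And>t. t \<ge> 0 \<Longrightarrow> (Xc has_vector_derivative fbar (Xc t)) (at t within {0..})"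
    and Xc_0: "Xc 0 = x"
  shows "\<exists>D L B. averaging_tube f fbar Xc SY D T L B x"
proof -
  have "continuous_on {0..T} Xc"
    unfolding continuous_on_eq_continuous_within
  proof
    fix t assume "t \<in> {0..T}"
    then have "(Xc has_vector_derivative fbar (Xc t)) (at t within {0..T})"
      using Xc_ode[of t] by (auto intro: has_vector_derivative_within_subset)
    then show "continuous (at t within {0..T}) Xc" by (rule has_vector_derivative_continuous)
  qed
  then obtain D where "compact D" and tube: "\<And>s. 0 \<le> s \<Longrightarrow> s \<le> T \<Longrightarrow> cball (Xc s) 1 \<subseteq> D"
    using compact_neighbourhood_of_path[of "{0..T}" Xc] by auto
  have "x \<in> D" using tube[of 0] T Xc_0 by auto
  obtain k where k: "\<forall>x1\<in>D. \<forall>x2\<in>D. \<forall>y\<in>SY. norm (f x1 y - f x2 y) \<le> k * norm (x1 - x2)"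
    using f_lip[OF \<open>compact D\<close>] by blast
  define L where "L = \<bar>k\<bar> + 1"
  have L: "L > 0" by (simp add: L_def)
  have f_lipschitz: "norm (f a y - f b y) \<le> L * norm (a - b)" if "a \<in> D" "b \<in> D" "y \<in> SY" for a b y
  proof -
    have "k * norm (a - b) \<le> L * norm (a - b)" unfolding L_def by (intro mult_right_mono) auto
    with k that show ?thesis by fastforce
  qed
  have "\<exists>B>0. \<forall>a\<in>D. \<forall>y\<in>SY. norm (f a y) \<le> B"
    using L f_lipschitz \<open>x \<in> D\<close>
    by (intro uniform_bound_from_lipschitz[where z = x and L = L] compact_imp_bounded \<open>compact D\<close> f_bdd)
      auto
  then obtain B where B: "B > 0" and f_bounded: "\<And>a y. a \<in> D \<Longrightarrow> y \<in> SY \<Longrightarrow> norm (f a y) \<le> B"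
    by blast
  have f_slice: "continuous_on UNIV (f a)" for a
  proof -
    have "continuous_on UNIV (\<lambda>y. (\<lambda>(x, y). f x y) (a, y))"
      by (rule continuous_on_compose2[OF f_cont]) (auto intro: continuous_intros)
    then show ?thesis by simp
  qed
  note fbar = averaged_field_bounds[OF \<mu> f_slice f_bdd fbar_def]
  have "averaging_tube f fbar Xc SY D T L B x"
  proof
    show "norm (fbar a - fbar b) \<le> L * norm (a - b)" if "a \<in> D" "b \<in> D" for a b
      using that f_lipschitz by (intro fbar(2)) auto
    show "norm (fbar a) \<le> B" if "a \<in> D" for a
      using that f_bounded by (intro fbar(1)) auto
  qed (use T L B f_lipschitz tube Xc_ode Xc_0 in auto)
  then show ?thesis by blast
qed

theorem lemma1:
  fixes M :: "'w measure"
    and f :: "'n::euclidean_space \<Rightarrow> 'm::euclidean_space \<Rightarrow> 'n"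
    and Y :: "nat \<Rightarrow> 'w \<Rightarrow> 'm"
    and SY :: "'m set"
    and \<mu> :: "'m measure"
    and fbar :: "'n \<Rightarrow> 'n"
    and x :: 'n
    and Xc :: "real \<Rightarrow> 'n"
  assumes prob: "prob_space M"
    and compl: "complete_measure M"
    and Y_rv: "\<And>k. Y k \<in> borel_measurable M"
    and Y_SY: "\<And>k \<omega>. \<omega> \<in> space M \<Longrightarrow> Y k \<omega> \<in> SY"
    \<comment> \<open>(A1)\<close>
    and A1_cont: "continuous_on UNIV (\<lambda>(x, y). f x y)"
    and A1_bdd: "\<And>x. bounded (range (f x))"
    and A1_lip: "\<And>D. compact D \<Longrightarrow> \<exists>k. \<forall>x1\<in>D. \<forall>x2\<in>D. \<forall>y\<in>SY.
                   norm (f x1 y - f x2 y) \<le> k * norm (x1 - x2)"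
    \<comment> \<open>(A2)\<close>
    and mu_prob: "prob_space \<mu>"
    and mu_sets: "sets \<mu> = sets borel"
    and SY_meas: "SY \<in> sets \<mu>"
    and mu_SY: "emeasure \<mu> SY = 1"
    and fbar_def: "\<And>x. fbar x = (LINT y:SY|\<mu>. f x y)"
    and A2_erg: "\<And>x. AE \<omega> in M.
          (\<lambda>N. (1 / real (N + 1)) *\<^sub>R (\<Sum>k\<le>N. f x (Y (Suc k) \<omega>))) \<longlonglongrightarrow> fbar x"
    \<comment> \<open>(A3): Xc solves the continuous average system on [0, infinity)\<close>
    and Xc_0: "Xc 0 = x"
    and Xc_ode: "\<And>t. t \<ge> 0 \<Longrightarrow> (Xc has_vector_derivative fbar (Xc t)) (at t within {0..})"
  shows "\<forall>T>0. AE \<omega> in M.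
           ((\<lambda>eps. SUP t\<in>{0..T}. norm (Xpc f Y x eps \<omega> t - Xc t)) \<longlongrightarrow> 0) (at_right 0)"
proof (intro allI impI)
  fix T :: real assume "T > 0"
  obtain D L B where tube: "averaging_tube f fbar Xc SY D T L B x"
    using averaging_tube_exists[OF \<open>T > 0\<close> A1_cont A1_bdd A1_lip mu_prob mu_sets SY_meas mu_SY
        fbar_def Xc_ode Xc_0] by blast
  define grid where "grid = (\<lambda>(j, p). Xc (real j * T / real p)) ` (UNIV :: (nat \<times> nat) set)"
  have "AE \<omega> in M. \<forall>z\<in>grid. (\<lambda>N. (1 / real (N + 1)) *\<^sub>R (\<Sum>k\<le>N. f z (Y (Suc k) \<omega>))) \<longlonglongrightarrow> fbar z"
    by (intro AE_ball_countable' A2_erg) (simp add: grid_def)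
  moreover have "AE \<omega> in M. \<forall>i. Y (Suc i) \<omega> \<in> SY" using Y_SY by (intro AE_I2) auto
  ultimately show "AE \<omega> in M. ((\<lambda>eps. SUP t\<in>{0..T}. norm (Xpc f Y x eps \<omega> t - Xc t)) \<longlongrightarrow> 0) (at_right 0)"
  proof eventually_elim
    case (elim \<omega>)
    have "Xc (real j * T / real p) \<in> grid" for j p by (auto simp: grid_def)
    with elim have ergodic: "(\<lambda>N. (1 / real (N + 1)) *\<^sub>R (\<Sum>k\<le>N. f (Xc (real j * T / real p)) (Y (Suc k) \<omega>)))
        \<longlonglongrightarrow> fbar (Xc (real j * T / real p))" for j p by blast
    show ?case
      using \<open>T > 0\<close> elim(2)
      by (intro tendsto_SUP_norm_zero averaging_tube.euler_uniform_convergence[OF tube]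
          averaging_tube.averaging_along_Xc[OF tube _ ergodic]) auto
  qed
qed

end
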